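(* The functor $P:\ell\text{-BS}\to\ell\text{-BSYM}$ is left adjoint to the functor $\mathrm{Ext}_\ell:\ell\text{-BSYM}\to\ell\text{-BS}$. The counit at an object $(X,A,\models)$ is $\xi_{(X,A,\models)}=(\mathrm{id}_X,\mathrm{ext}_\ell):P(\mathrm{Ext}_\ell(X,A,\models))\to(X,A,\models)$, where $\mathrm{ext}_\ell:A\to\mathrm{Cont}(\mathrm{Ext}_\ell(X,A,\models))$ sends $a$ to the function $x\mapsto\models(x,a)$; i.e. for every object $(S,\alpha)$ of $\ell$-BS and every $\ell$-BSYM arrow $(f,\phi):P(S,\alpha)\to(X,A,\models)$ there is a unique $\ell$-BS arrow $\tilde f:(S,\alpha)\to\mathrm{Ext}_\ell(X,A,\models)$ with $(f,\phi)=\xi_{(X,A,\models)}\circ P(\tilde f)$ (namely $\tilde f=f$).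
   Context: Throughout, $\ell$ is a fixed finite distributive lattice with bottom $0$ and top $1$, regarded as a Heyting algebra with relative pseudocomplement $\to$, and equipped with unary operations $T_r$ ($r\in\ell$) given by $T_r(x)=1$ if $x=r$ and $T_r(x)=0$ otherwise. An $\ell$-VL-algebra is an algebra $(A,\wedge,\vee,\to,(T_r)_{r\in\ell},0,1)$ of this signature belonging to the variety generated by $\ell$ (equivalently, algebras isomorphic to subalgebras of direct powers of $\ell$); homomorphisms preserve all these operations. $\mathrm{Subalg}(\ell)$ is the set of subalgebras of $\ell$. A Boolean space is a compact Hausdorff zero-dimensional space; $\ell$ and its subalgebras carry the discrete topology. The category $\ell$-BS has as objects pairs $(S,\alpha)$ with $S$ a Boolean space and $\alpha$ a map from $\mathrm{Subalg}(\ell)$ to the closed subspaces of $S$ with $\alpha(\ell)=S$ and $\alpha(L_1\cap L_2)=\alpha(L_1)\cap\alpha(L_2)$; its arrows $f:(S_1,\alpha_1)\to(S_2,\alpha_2)$ are continuous maps with $f(\alpha_1(L))\subseteq\alpha_2(L)$ for all $L$. $\mathrm{Cont}(S,\alpha)$ is the set of continuous maps $v:S\to\ell$ with $v(\alpha(L))\subseteq L$ for all $L\in\mathrm{Subalg}(\ell)$, an $\ell$-VL-algebra under pointwise operations. An $\ell$-Boolean system is a triple $(X,A,\models)$ where $X$ is a nonempty set, $A$ is an $\ell$-VL-algebra, and $\models:X\times A\to\ell$ is a map such that for all $x\in X$, $a,b\in A$, $r\in\ell$: (1) $\models(x,\bigvee A_1)=\bigvee_{a\in A_1}\models(x,a)$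 for every subset $A_1\subseteq A$ (whose join exists in $A$), and $\models(x,a\wedge b)=\models(x,a)\wedge\models(x,b)$; (2) if $x_1\neq x_2$ then $\models(x_1,a)\neq\models(x_2,a)$ for some $a$; (3) $\models(x,a\to b)=\models(x,a)\to\models(x,b)$; (4) $\models(x,T_r(a))=T_r(\models(x,a))$; (5) $\models(x,0)=0$, $\models(x,1)=1$. The category $\ell$-BSYM has these as objects; an arrow $(\psi_1,\psi_2):(X,A,\models_1)\to(Y,B,\models_2)$ is a function $\psi_1:X\to Y$ with an $\ell$-VL-algebra homomorphism $\psi_2:B\to A$ such that $\models_1(x,\psi_2(b))=\models_2(\psi_1(x),b)$; composition is $(\phi_1,\phi_2)\circ(\psi_1,\psi_2)=(\phi_1\circ\psi_1,\psi_2\circ\phi_2)$. Functors: $\mathrm{Ext}_\ell(X,A,\models)=((X,\tau_A),\alpha_A)$, where $\tau_A$ is the topology on $X$ generated by the sets $\{x\in X:\models(x,a)=r\}$ ($a\in A$, $r\in\ell$) and $\alpha_A(K)=\{x\in X:\models(x,a)\in K\text{ for all }a\in A\}$ for $K\in\mathrm{Subalg}(\ell)$; $\mathrm{Ext}_\ell(\psi_1,\psi_2)=\psi_1$. $P(S,\alpha)=(S,\mathrm{Cont}(S,\alpha),\models_S)$ with $\models_S(s,v)=v(s)$, and $P(f)=(f,f^{-1})$ with $f^{-1}(v)=v\circ f$. *)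

theory Defs
  imports "HOL-Analysis.Analysis" "HOL-Library.FuncSet"
begin

definition himp :: "'l::finite_distrib_lattice \<Rightarrow> 'l \<Rightarrow> 'l" where
  "himp x y = Sup {z. inf z x \<le> y}"

definition Tl :: "'l::finite_distrib_lattice \<Rightarrow> 'l \<Rightarrow> 'l" where
  "Tl r x = (if x = r then top else bot)"

definition Subalg :: "'l::finite_distrib_lattice set set" where
  "Subalg = {L. bot \<in> L \<and> top \<in> L \<and>
     (\<forall>x\<in>L. \<forall>y\<in>L. inf x y \<in> L \<and> sup x y \<in> L \<and> himp x y \<in> L) \<and>
     (\<forall>r. \<forall>x\<in>L. Tl r x \<in> L)}"

record ('a, 'l) valg =
  vcarrier :: "'a set"
  vmeet :: "'a \<Rightarrow> 'a \<Rightarrow> 'a"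
  vjoin :: "'a \<Rightarrow> 'a \<Rightarrow> 'a"
  vimp :: "'a \<Rightarrow> 'a \<Rightarrow> 'a"
  vT :: "'l \<Rightarrow> 'a \<Rightarrow> 'a"
  vzero :: "'a"
  vone :: "'a"

definition valg_closed :: "('a, 'l) valg \<Rightarrow> bool" where
  "valg_closed A \<longleftrightarrow> vzero A \<in> vcarrier A \<and> vone A \<in> vcarrier A \<and>
     (\<forall>a\<in>vcarrier A. \<forall>b\<in>vcarrier A. vmeet A a b \<in> vcarrier A \<and> vjoin A a b \<in> vcarrier A
        \<and> vimp A a b \<in> vcarrier A) \<and>
     (\<forall>r. \<forall>a\<in>vcarrier A. vT A r a \<in> vcarrier A)"

definition valg_hom :: "('a, 'l) valg \<Rightarrow> ('b, 'l) valg \<Rightarrow> ('a \<Rightarrow> 'b) \<Rightarrow> bool" where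
  "valg_hom A B h \<longleftrightarrow> (\<forall>a\<in>vcarrier A. h a \<in> vcarrier B) \<and>
     (\<forall>a\<in>vcarrier A. \<forall>b\<in>vcarrier A.
        h (vmeet A a b) = vmeet B (h a) (h b) \<and> h (vjoin A a b) = vjoin B (h a) (h b) \<and>
        h (vimp A a b) = vimp B (h a) (h b)) \<and>
     (\<forall>r. \<forall>a\<in>vcarrier A. h (vT A r a) = vT B r (h a)) \<and>
     h (vzero A) = vzero B \<and> h (vone A) = vone B"

text \<open>An \<open>\<ell>\<close>-VL-algebra: an algebra isomorphic to a subalgebra of a direct power \<open>\<ell>^I\<close>.
  The index set I is taken inside the type \<open>'a \<Rightarrow> 'l\<close>, which is large enough (the
  homomorphisms A \<rightarrow> \<open>\<ell>\<close> live there).\<close>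
definition vl_algebra :: "('a, 'l::finite_distrib_lattice) valg \<Rightarrow> bool" where
  "vl_algebra A \<longleftrightarrow> valg_closed A \<and>
     (\<exists>(I :: ('a \<Rightarrow> 'l) set) (h :: 'a \<Rightarrow> ('a \<Rightarrow> 'l) \<Rightarrow> 'l).
        (\<forall>a\<in>vcarrier A. \<forall>b\<in>vcarrier A. a \<noteq> b \<longrightarrow> (\<exists>i\<in>I. h a i \<noteq> h b i)) \<and>
        (\<forall>i\<in>I.
           (\<forall>a\<in>vcarrier A. \<forall>b\<in>vcarrier A.
              h (vmeet A a b) i = inf (h a i) (h b i) \<and>
              h (vjoin A a b) i = sup (h a i) (h b i) \<and>
              h (vimp A a b) i = himp (h a i) (h b i)) \<and>
           (\<forall>r. \<forall>a\<in>vcarrier A. h (vT A r a) i = Tl r (h a i)) \<and>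
           h (vzero A) i = bot \<and> h (vone A) i = top))"

definition vle :: "('a, 'l) valg \<Rightarrow> 'a \<Rightarrow> 'a \<Rightarrow> bool" where
  "vle A a b \<longleftrightarrow> vmeet A a b = a"

definition is_vjoin :: "('a, 'l) valg \<Rightarrow> 'a set \<Rightarrow> 'a \<Rightarrow> bool" where
  "is_vjoin A A1 c \<longleftrightarrow> c \<in> vcarrier A \<and> (\<forall>a\<in>A1. vle A a c) \<and>
     (\<forall>d\<in>vcarrier A. (\<forall>a\<in>A1. vle A a d) \<longrightarrow> vle A c d)"

definition boolean_space :: "'s topology \<Rightarrow> bool" where
  "boolean_space S \<longleftrightarrow> compact_space S \<and> Hausdorff_space S \<and> S dim_le 0"

definition BS_obj :: "'s topology \<Rightarrow> ('l::finite_distrib_lattice set \<Rightarrow> 's set) \<Rightarrow> bool" where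
  "BS_obj S \<alpha> \<longleftrightarrow> boolean_space S \<and> (\<forall>L\<in>Subalg. closedin S (\<alpha> L)) \<and>
     \<alpha> UNIV = topspace S \<and> (\<forall>L1\<in>Subalg. \<forall>L2\<in>Subalg. \<alpha> (L1 \<inter> L2) = \<alpha> L1 \<inter> \<alpha> L2)"

definition BS_arrow :: "'s topology \<Rightarrow> ('l::finite_distrib_lattice set \<Rightarrow> 's set) \<Rightarrow>
    't topology \<Rightarrow> ('l set \<Rightarrow> 't set) \<Rightarrow> ('s \<Rightarrow> 't) \<Rightarrow> bool" where
  "BS_arrow S1 \<alpha>1 S2 \<alpha>2 f \<longleftrightarrow> continuous_map S1 S2 f \<and> (\<forall>L\<in>Subalg. f ` \<alpha>1 L \<subseteq> \<alpha>2 L)"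

text \<open>Cont(S,\<open>\<alpha>\<close>): continuous maps into discrete \<open>\<ell>\<close>, represented extensionally on the points of S.\<close>
definition Cont :: "'s topology \<Rightarrow> ('l::finite_distrib_lattice set \<Rightarrow> 's set) \<Rightarrow> ('s \<Rightarrow> 'l) set" where
  "Cont S \<alpha> = {v. v \<in> extensional (topspace S) \<and>
      continuous_map S (discrete_topology (UNIV :: 'l set)) v \<and> (\<forall>L\<in>Subalg. v ` \<alpha> L \<subseteq> L)}"

definition Cont_alg :: "'s topology \<Rightarrow> ('l::finite_distrib_lattice set \<Rightarrow> 's set) \<Rightarrow> ('s \<Rightarrow> 'l, 'l) valg" where
  "Cont_alg S \<alpha> = \<lparr> vcarrier = Cont S \<alpha>,
      vmeet = (\<lambda>v w. restrict (\<lambda>s. inf (v s) (w s)) (topspace S)),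
      vjoin = (\<lambda>v w. restrict (\<lambda>s. sup (v s) (w s)) (topspace S)),
      vimp = (\<lambda>v w. restrict (\<lambda>s. himp (v s) (w s)) (topspace S)),
      vT = (\<lambda>r v. restrict (\<lambda>s. Tl r (v s)) (topspace S)),
      vzero = restrict (\<lambda>s. bot) (topspace S),
      vone = restrict (\<lambda>s. top) (topspace S) \<rparr>"

definition BSYM_obj :: "'x set \<Rightarrow> ('a, 'l::finite_distrib_lattice) valg \<Rightarrow> ('x \<Rightarrow> 'a \<Rightarrow> 'l) \<Rightarrow> bool" where
  "BSYM_obj X A m \<longleftrightarrow> X \<noteq> {} \<and> vl_algebra A \<and>
     (\<forall>x\<in>X.
        (\<forall>A1 c. A1 \<subseteq> vcarrier A \<longrightarrow> is_vjoin A A1 c \<longrightarrow> m x c = Sup ((\<lambda>a. m x a) ` A1)) \<and>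
        (\<forall>a\<in>vcarrier A. \<forall>b\<in>vcarrier A. m x (vmeet A a b) = inf (m x a) (m x b)) \<and>
        (\<forall>a\<in>vcarrier A. \<forall>b\<in>vcarrier A. m x (vimp A a b) = himp (m x a) (m x b)) \<and>
        (\<forall>r. \<forall>a\<in>vcarrier A. m x (vT A r a) = Tl r (m x a)) \<and>
        m x (vzero A) = bot \<and> m x (vone A) = top) \<and>
     (\<forall>x1\<in>X. \<forall>x2\<in>X. x1 \<noteq> x2 \<longrightarrow> (\<exists>a\<in>vcarrier A. m x1 a \<noteq> m x2 a))"

definition BSYM_arrow :: "'x set \<Rightarrow> ('a, 'l) valg \<Rightarrow> ('x \<Rightarrow> 'a \<Rightarrow> 'l) \<Rightarrow>
    'y set \<Rightarrow> ('b, 'l) valg \<Rightarrow> ('y \<Rightarrow> 'b \<Rightarrow> 'l) \<Rightarrow> ('x \<Rightarrow> 'y) \<times> ('b \<Rightarrow> 'a) \<Rightarrow> bool" where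
  "BSYM_arrow X A m1 Y B m2 p \<longleftrightarrow> (\<forall>x\<in>X. fst p x \<in> Y) \<and> valg_hom B A (snd p) \<and>
     (\<forall>x\<in>X. \<forall>b\<in>vcarrier B. m1 x (snd p b) = m2 (fst p x) b)"

definition BSYM_comp :: "('y \<Rightarrow> 'z) \<times> ('c \<Rightarrow> 'b) \<Rightarrow> ('x \<Rightarrow> 'y) \<times> ('b \<Rightarrow> 'a) \<Rightarrow> ('x \<Rightarrow> 'z) \<times> ('c \<Rightarrow> 'a)" where
  "BSYM_comp \<phi> \<psi> = (fst \<phi> \<circ> fst \<psi>, snd \<psi> \<circ> snd \<phi>)"

definition BSYM_arrow_eq :: "'x set \<Rightarrow> ('b, 'l) valg \<Rightarrow> ('x \<Rightarrow> 'y) \<times> ('b \<Rightarrow> 'a) \<Rightarrow> ('x \<Rightarrow> 'y) \<times> ('b \<Rightarrow> 'a) \<Rightarrow> bool" where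
  "BSYM_arrow_eq X B p q \<longleftrightarrow> (\<forall>x\<in>X. fst p x = fst q x) \<and> (\<forall>b\<in>vcarrier B. snd p b = snd q b)"

definition Ext_top :: "'x set \<Rightarrow> ('a, 'l) valg \<Rightarrow> ('x \<Rightarrow> 'a \<Rightarrow> 'l) \<Rightarrow> 'x topology" where
  "Ext_top X A m = topology_generated_by {{x\<in>X. m x a = r} | a r. a \<in> vcarrier A}"

definition Ext_alpha :: "'x set \<Rightarrow> ('a, 'l) valg \<Rightarrow> ('x \<Rightarrow> 'a \<Rightarrow> 'l) \<Rightarrow> 'l set \<Rightarrow> 'x set" where
  "Ext_alpha X A m K = {x\<in>X. \<forall>a\<in>vcarrier A. m x a \<in> K}"

text \<open>P on arrows: second component \<open>f\<^sup>-\<^sup>1(v) = v \<circ> f\<close> (restricted to the points of the source).\<close>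
definition P_arrow :: "'s topology \<Rightarrow> ('s \<Rightarrow> 't) \<Rightarrow> ('s \<Rightarrow> 't) \<times> (('t \<Rightarrow> 'l) \<Rightarrow> ('s \<Rightarrow> 'l))" where
  "P_arrow S f = (f, \<lambda>v. restrict (v \<circ> f) (topspace S))"

text \<open>Evaluation satisfaction relation of P(S,\<open>\<alpha>\<close>).\<close>
definition eval_sat :: "'s \<Rightarrow> ('s \<Rightarrow> 'l) \<Rightarrow> 'l" where
  "eval_sat s v = v s"

definition ext_l :: "'x set \<Rightarrow> ('x \<Rightarrow> 'a \<Rightarrow> 'l) \<Rightarrow> 'a \<Rightarrow> ('x \<Rightarrow> 'l)" where
  "ext_l X m a = restrict (\<lambda>x. m x a) X"

definition counit :: "'x set \<Rightarrow> ('x \<Rightarrow> 'a \<Rightarrow> 'l) \<Rightarrow> ('x \<Rightarrow> 'x) \<times> ('a \<Rightarrow> ('x \<Rightarrow> 'l))" where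
  "counit X m = (id, ext_l X m)"

end

theory Submission
  imports Defs
begin

text \<open>An arrow
  \<open>(f,\<phi>) : P(S,\<alpha>) \<rightarrow> (X,A,\<Turnstile>)\<close> forces \<open>\<phi>(a) = \<Turnstile>(f(-),a)\<close>; since \<open>\<phi>(a)\<close> is continuous and maps
  \<open>\<alpha>(L)\<close> into \<open>L\<close>, the map \<open>f\<close> is an arrow of \<open>\<ell>\<close>-BS into \<open>Ext\<^sub>\<ell>(X,A,\<Turnstile>)\<close>, and the same identity
  says \<open>(f,\<phi>) = \<xi> \<circ> P(f)\<close>. Uniqueness is immediate: the first component of \<open>\<xi> \<circ> P(g)\<close> is \<open>g\<close>.\<close>

lemma vl_algebra_carrier_nonempty: "vl_algebra A \<Longrightarrow> vcarrier A \<noteq> {}"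
  unfolding vl_algebra_def valg_closed_def by blast

lemma BSYM_obj_vl_algebra: "BSYM_obj X A m \<Longrightarrow> vl_algebra A"
  by (simp add: BSYM_obj_def)

text \<open>Axiom (1) of an \<open>\<ell>\<close>-Boolean system only speaks about joins in the sense of \<open>is_vjoin\<close>, so to see
  that \<open>\<Turnstile>(x,-)\<close> preserves \<open>vjoin\<close> one must know that \<open>vjoin\<close> is a least upper bound; this holds because
  \<open>A\<close> embeds into a power of \<open>\<ell>\<close>, where order and join are computed coordinatewise.\<close>

lemma vl_algebra_vle_vjoin_pointwise:
  fixes A :: "('a, 'l::finite_distrib_lattice) valg"
  assumes "vl_algebra A"
  obtains I and h :: "'a \<Rightarrow> ('a \<Rightarrow> 'l) \<Rightarrow> 'l"
  where "\<And>x y. x \<in> vcarrier A \<Longrightarrow> y \<in> vcarrier A \<Longrightarrow> vle A x y \<longleftrightarrow> (\<forall>i\<in>I. h x i \<le> h y i)"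
    and "\<And>x y i. x \<in> vcarrier A \<Longrightarrow> y \<in> vcarrier A \<Longrightarrow> i \<in> I \<Longrightarrow>
           h (vjoin A x y) i = sup (h x i) (h y i)"
proof -
  have closed: "valg_closed A" using assms unfolding vl_algebra_def by blast
  from assms obtain I and h :: "'a \<Rightarrow> ('a \<Rightarrow> 'l) \<Rightarrow> 'l" where
    inj: "\<forall>a\<in>vcarrier A. \<forall>b\<in>vcarrier A. a \<noteq> b \<longrightarrow> (\<exists>i\<in>I. h a i \<noteq> h b i)" and
    hom: "\<forall>i\<in>I.
           (\<forall>a\<in>vcarrier A. \<forall>b\<in>vcarrier A.
              h (vmeet A a b) i = inf (h a i) (h b i) \<and>
              h (vjoin A a b) i = sup (h a i) (h b i) \<and>
              h (vimp A a b) i = himp (h a i) (h b i)) \<and>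
           (\<forall>r. \<forall>a\<in>vcarrier A. h (vT A r a) i = Tl r (h a i)) \<and>
           h (vzero A) i = bot \<and> h (vone A) i = top"
    unfolding vl_algebra_def by blast
  have join: "h (vjoin A x y) i = sup (h x i) (h y i)"
    if "x \<in> vcarrier A" "y \<in> vcarrier A" "i \<in> I" for x y i
    using hom that by simp
  have "vle A x y \<longleftrightarrow> (\<forall>i\<in>I. h x i \<le> h y i)"
    if x: "x \<in> vcarrier A" and y: "y \<in> vcarrier A" for x y
  proof -
    have meet: "h (vmeet A x y) i = inf (h x i) (h y i)" if "i \<in> I" for i
      using hom that x y by simp
    have "vmeet A x y \<in> vcarrier A" using closed x y unfolding valg_closed_def by blast
    then have "vmeet A x y = x \<longleftrightarrow> (\<forall>i\<in>I. h (vmeet A x y) i = h x i)"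
      using inj x by auto
    also have "\<dots> \<longleftrightarrow> (\<forall>i\<in>I. h x i \<le> h y i)"
      by (simp add: meet inf.absorb_iff1 eq_commute)
    finally show ?thesis unfolding vle_def .
  qed
  then show ?thesis using join by (rule that)
qed

lemma is_vjoin_vjoin:
  fixes A :: "('a, 'l::finite_distrib_lattice) valg"
  assumes "vl_algebra A" "a \<in> vcarrier A" "b \<in> vcarrier A"
  shows "is_vjoin A {a, b} (vjoin A a b)"
proof -
  obtain I and h :: "'a \<Rightarrow> ('a \<Rightarrow> 'l) \<Rightarrow> 'l"
    where le: "\<And>x y. x \<in> vcarrier A \<Longrightarrow> y \<in> vcarrier A \<Longrightarrow> vle A x y \<longleftrightarrow> (\<forall>i\<in>I. h x i \<le> h y i)"
      and join: "\<And>x y i. x \<in> vcarrier A \<Longrightarrow> y \<in> vcarrier A \<Longrightarrow> i \<in> I \<Longrightarrow>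
                   h (vjoin A x y) i = sup (h x i) (h y i)"
    using vl_algebra_vle_vjoin_pointwise[OF assms(1)] by blast
  have ab: "vjoin A a b \<in> vcarrier A" using assms unfolding vl_algebra_def valg_closed_def by blast
  have "vle A a (vjoin A a b)" "vle A b (vjoin A a b)"
    using assms(2,3) ab by (simp_all add: le join)
  moreover have "vle A (vjoin A a b) d" if "d \<in> vcarrier A" "vle A a d" "vle A b d" for d
    using that assms(2,3) ab by (simp add: le join)
  ultimately show ?thesis unfolding is_vjoin_def using ab by blast
qed

lemma BSYM_obj_satD:
  assumes "BSYM_obj X A m" "x \<in> X"
  shows "\<And>A1 c. A1 \<subseteq> vcarrier A \<Longrightarrow> is_vjoin A A1 c \<Longrightarrow> m x c = Sup ((\<lambda>a. m x a) ` A1)"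
    and "\<And>a b. a \<in> vcarrier A \<Longrightarrow> b \<in> vcarrier A \<Longrightarrow> m x (vmeet A a b) = inf (m x a) (m x b)"
    and "\<And>a b. a \<in> vcarrier A \<Longrightarrow> b \<in> vcarrier A \<Longrightarrow> m x (vimp A a b) = himp (m x a) (m x b)"
    and "\<And>r a. a \<in> vcarrier A \<Longrightarrow> m x (vT A r a) = Tl r (m x a)"
    and "m x (vzero A) = bot" and "m x (vone A) = top"
proof -
  have "(\<forall>A1 c. A1 \<subseteq> vcarrier A \<longrightarrow> is_vjoin A A1 c \<longrightarrow> m x c = Sup ((\<lambda>a. m x a) ` A1)) \<and>
        (\<forall>a\<in>vcarrier A. \<forall>b\<in>vcarrier A. m x (vmeet A a b) = inf (m x a) (m x b)) \<and>
        (\<forall>a\<in>vcarrier A. \<forall>b\<in>vcarrier A. m x (vimp A a b) = himp (m x a) (m x b)) \<and>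
        (\<forall>r. \<forall>a\<in>vcarrier A. m x (vT A r a) = Tl r (m x a)) \<and>
        m x (vzero A) = bot \<and> m x (vone A) = top"
    using assms unfolding BSYM_obj_def by blast
  then show "\<And>A1 c. A1 \<subseteq> vcarrier A \<Longrightarrow> is_vjoin A A1 c \<Longrightarrow> m x c = Sup ((\<lambda>a. m x a) ` A1)"
    and "\<And>a b. a \<in> vcarrier A \<Longrightarrow> b \<in> vcarrier A \<Longrightarrow> m x (vmeet A a b) = inf (m x a) (m x b)"
    and "\<And>a b. a \<in> vcarrier A \<Longrightarrow> b \<in> vcarrier A \<Longrightarrow> m x (vimp A a b) = himp (m x a) (m x b)"
    and "\<And>r a. a \<in> vcarrier A \<Longrightarrow> m x (vT A r a) = Tl r (m x a)"
    and "m x (vzero A) = bot" and "m x (vone A) = top"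
    by simp_all
qed

lemma BSYM_obj_sat_vjoin:
  assumes "BSYM_obj X A m" "x \<in> X" "a \<in> vcarrier A" "b \<in> vcarrier A"
  shows "m x (vjoin A a b) = sup (m x a) (m x b)"
proof -
  have "is_vjoin A {a, b} (vjoin A a b)"
    using BSYM_obj_vl_algebra[OF assms(1)] assms(3,4) by (rule is_vjoin_vjoin)
  moreover have "{a, b} \<subseteq> vcarrier A" using assms(3,4) by simp
  ultimately have "m x (vjoin A a b) = Sup ((\<lambda>c. m x c) ` {a, b})"
    using BSYM_obj_satD(1)[OF assms(1,2)] by blast
  then show ?thesis by simp
qed

lemma topspace_Ext_top:
  assumes "vcarrier A \<noteq> {}"
  shows "topspace (Ext_top X A m) = X"
  using assms unfolding Ext_top_def topology_generated_by_topspace by auto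

lemma ext_l_apply: "x \<in> X \<Longrightarrow> ext_l X m a x = m x a"
  by (simp add: ext_l_def)

lemma ext_l_eq_restrict_iff: "ext_l X m a = restrict F X \<longleftrightarrow> (\<forall>x\<in>X. m x a = F x)"
  by (auto simp: ext_l_def fun_eq_iff)

lemma ext_l_in_Cont:
  fixes m :: "'x \<Rightarrow> 'a \<Rightarrow> 'l::finite_distrib_lattice"
  assumes "vcarrier A \<noteq> {}" "a \<in> vcarrier A"
  shows "ext_l X m a \<in> Cont (Ext_top X A m) (Ext_alpha X A m)"
proof -
  have "openin (Ext_top X A m) {x \<in> X. ext_l X m a x \<in> U}" for U :: "'l set"
  proof -
    have "{x \<in> X. ext_l X m a x \<in> U} = (\<Union>r\<in>U. {x \<in> X. m x a = r})"
      by (auto simp: ext_l_def)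
    moreover have "openin (Ext_top X A m) (\<Union>r\<in>U. {x \<in> X. m x a = r})"
      unfolding Ext_top_def using assms(2)
      by (intro openin_Union) (auto intro!: topology_generated_by_Basis)
    ultimately show ?thesis by simp
  qed
  then have "continuous_map (Ext_top X A m) (discrete_topology UNIV) (ext_l X m a)"
    by (simp add: continuous_map_def topspace_Ext_top[OF assms(1)])
  moreover have "\<forall>L\<in>Subalg. ext_l X m a ` Ext_alpha X A m L \<subseteq> L"
    using assms(2) by (auto simp: ext_l_def Ext_alpha_def)
  ultimately show ?thesis
    unfolding Cont_def by (simp add: topspace_Ext_top[OF assms(1)] ext_l_def)
qed

lemma valg_hom_ext_l:
  assumes obj: "BSYM_obj X A m"
  shows "valg_hom A (Cont_alg (Ext_top X A m) (Ext_alpha X A m)) (ext_l X m)"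
proof -
  have nonempty: "vcarrier A \<noteq> {}"
    using obj by (intro vl_algebra_carrier_nonempty BSYM_obj_vl_algebra)
  show ?thesis
    unfolding valg_hom_def Cont_alg_def topspace_Ext_top[OF nonempty]
    by (simp add: ext_l_in_Cont[OF nonempty] ext_l_eq_restrict_iff ext_l_apply
        BSYM_obj_satD(2-6)[OF obj] BSYM_obj_sat_vjoin[OF obj])
qed

lemma BSYM_arrow_counit:
  assumes "BSYM_obj X A m"
  shows "BSYM_arrow X (Cont_alg (Ext_top X A m) (Ext_alpha X A m)) eval_sat X A m (counit X m)"
  using valg_hom_ext_l[OF assms]
  by (simp add: BSYM_arrow_def counit_def eval_sat_def ext_l_def)

lemma continuous_map_into_Ext_top:
  assumes "vcarrier A \<noteq> {}" "f ` topspace S \<subseteq> X"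
    and "\<And>a. a \<in> vcarrier A \<Longrightarrow> continuous_map S (discrete_topology UNIV) (\<lambda>s. m (f s) a)"
  shows "continuous_map S (Ext_top X A m) f"
  unfolding Ext_top_def
proof (rule continuous_on_generated_topo)
  fix U assume "U \<in> {{x \<in> X. m x a = r} | a r. a \<in> vcarrier A}"
  then obtain a r where a: "a \<in> vcarrier A" and U: "U = {x \<in> X. m x a = r}" by blast
  have "openin S {s \<in> topspace S. m (f s) a \<in> {r}}"
    using assms(3)[OF a] by (rule openin_continuous_map_preimage) simp
  moreover have "f -` U \<inter> topspace S = {s \<in> topspace S. m (f s) a \<in> {r}}"
    using assms(2) U by auto
  ultimately show "openin S (f -` U \<inter> topspace S)" by simp
next
  show "f ` topspace S \<subseteq> \<Union> {{x \<in> X. m x a = r} | a r. a \<in> vcarrier A}"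
  proof
    fix y assume "y \<in> f ` topspace S"
    then have y: "y \<in> X" using assms(2) by blast
    obtain a where a: "a \<in> vcarrier A" using assms(1) by blast
    then have "{x \<in> X. m x a = m y a} \<in> {{x \<in> X. m x a = r} | a r. a \<in> vcarrier A}" by blast
    moreover have "y \<in> {x \<in> X. m x a = m y a}" using y by simp
    ultimately show "y \<in> \<Union> {{x \<in> X. m x a = r} | a r. a \<in> vcarrier A}" by blast
  qed
qed

context
  fixes S :: "'s topology" and \<alpha> :: "'l::finite_distrib_lattice set \<Rightarrow> 's set"
    and X :: "'x set" and A :: "('a, 'l) valg" and m :: "'x \<Rightarrow> 'a \<Rightarrow> 'l"
    and f :: "'s \<Rightarrow> 'x" and \<phi> :: "'a \<Rightarrow> 's \<Rightarrow> 'l"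
  assumes arrow: "BSYM_arrow (topspace S) (Cont_alg S \<alpha>) eval_sat X A m (f, \<phi>)"
begin

lemma transpose_maps_into: "s \<in> topspace S \<Longrightarrow> f s \<in> X"
  using arrow unfolding BSYM_arrow_def by auto

lemma transpose_Cont: "a \<in> vcarrier A \<Longrightarrow> \<phi> a \<in> Cont S \<alpha>"
  using arrow unfolding BSYM_arrow_def valg_hom_def Cont_alg_def by auto

lemma transpose_sat: "s \<in> topspace S \<Longrightarrow> a \<in> vcarrier A \<Longrightarrow> \<phi> a s = m (f s) a"
  using arrow unfolding BSYM_arrow_def eval_sat_def by auto

lemma transpose_BS_arrow:
  assumes "BS_obj S \<alpha>" "vcarrier A \<noteq> {}"
  shows "BS_arrow S \<alpha> (Ext_top X A m) (Ext_alpha X A m) f"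
proof -
  have "continuous_map S (discrete_topology UNIV) (\<lambda>s. m (f s) a)" if a: "a \<in> vcarrier A" for a
  proof -
    have "continuous_map S (discrete_topology UNIV) (\<phi> a)"
      using transpose_Cont[OF a] by (simp add: Cont_def)
    then show ?thesis
      by (rule continuous_map_eq) (simp add: transpose_sat[OF _ a])
  qed
  then have "continuous_map S (Ext_top X A m) f"
    using assms(2) transpose_maps_into by (intro continuous_map_into_Ext_top) auto
  moreover have "f ` \<alpha> L \<subseteq> Ext_alpha X A m L" if L: "L \<in> Subalg" for L
  proof
    fix y assume "y \<in> f ` \<alpha> L"
    then obtain s where s: "s \<in> \<alpha> L" "y = f s" by blast
    have st: "s \<in> topspace S"
      using assms(1) L s closedin_subset unfolding BS_obj_def by blast
    have "m (f s) a \<in> L" if a: "a \<in> vcarrier A" for a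
    proof -
      have "\<phi> a ` \<alpha> L \<subseteq> L" using transpose_Cont[OF a] L by (simp add: Cont_def)
      then have "\<phi> a s \<in> L" using s(1) by blast
      then show ?thesis by (simp add: transpose_sat[OF st a])
    qed
    then show "y \<in> Ext_alpha X A m L"
      by (simp add: Ext_alpha_def s(2) transpose_maps_into[OF st])
  qed
  ultimately show ?thesis unfolding BS_arrow_def by blast
qed

lemma transpose_factors_through_counit:
  "BSYM_arrow_eq (topspace S) A (f, \<phi>) (BSYM_comp (counit X m) (P_arrow S f))"
proof -
  have "\<phi> a = restrict (ext_l X m a \<circ> f) (topspace S)" if a: "a \<in> vcarrier A" for a
  proof
    fix s
    have "\<phi> a \<in> extensional (topspace S)" using transpose_Cont[OF a] by (simp add: Cont_def)
    then show "\<phi> a s = restrict (ext_l X m a \<circ> f) (topspace S) s"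
      using transpose_sat[OF _ a, of s] transpose_maps_into[of s]
      by (auto simp: ext_l_def extensional_def)
  qed
  then show ?thesis
    unfolding BSYM_arrow_eq_def BSYM_comp_def counit_def P_arrow_def by simp
qed

end

lemma BSYM_arrow_eq_counit_P_unique:
  assumes "BSYM_arrow_eq (topspace S) A (f, \<phi>) (BSYM_comp (counit X m) (P_arrow S g))"
  shows "\<forall>s\<in>topspace S. g s = f s"
  using assms by (simp add: BSYM_arrow_eq_def BSYM_comp_def counit_def P_arrow_def)

theorem mainTheorem4:
  fixes X :: "'x set" and A :: "('a, 'l::finite_distrib_lattice) valg" and m :: "'x \<Rightarrow> 'a \<Rightarrow> 'l"
  assumes obj: "BSYM_obj X A m"
  shows
   "BSYM_arrow X (Cont_alg (Ext_top X A m) (Ext_alpha X A m)) eval_sat X A m (counit X m)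
    \<and> (\<forall>(S :: 's topology) (\<alpha> :: 'l set \<Rightarrow> 's set) (f :: 's \<Rightarrow> 'x) (\<phi> :: 'a \<Rightarrow> ('s \<Rightarrow> 'l)).
         BS_obj S \<alpha> \<longrightarrow>
         BSYM_arrow (topspace S) (Cont_alg S \<alpha>) eval_sat X A m (f, \<phi>) \<longrightarrow>
         (BS_arrow S \<alpha> (Ext_top X A m) (Ext_alpha X A m) f
          \<and> BSYM_arrow_eq (topspace S) A (f, \<phi>) (BSYM_comp (counit X m) (P_arrow S f))
          \<and> (\<forall>g. BS_arrow S \<alpha> (Ext_top X A m) (Ext_alpha X A m) g
                \<and> BSYM_arrow_eq (topspace S) A (f, \<phi>) (BSYM_comp (counit X m) (P_arrow S g))
                \<longrightarrow> (\<forall>s\<in>topspace S. g s = f s))))"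
proof -
  have nonempty: "vcarrier A \<noteq> {}"
    using obj by (intro vl_algebra_carrier_nonempty BSYM_obj_vl_algebra)
  show ?thesis
  proof (intro conjI allI impI)
    show "BSYM_arrow X (Cont_alg (Ext_top X A m) (Ext_alpha X A m)) eval_sat X A m (counit X m)"
      using BSYM_arrow_counit[OF obj] .
  next
    fix S :: "'s topology" and \<alpha> and f :: "'s \<Rightarrow> 'x" and \<phi> :: "'a \<Rightarrow> 's \<Rightarrow> 'l"
    assume "BS_obj S \<alpha>" and arrow: "BSYM_arrow (topspace S) (Cont_alg S \<alpha>) eval_sat X A m (f, \<phi>)"
    show "BS_arrow S \<alpha> (Ext_top X A m) (Ext_alpha X A m) f"
      using transpose_BS_arrow[OF arrow \<open>BS_obj S \<alpha>\<close> nonempty] .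
    show "BSYM_arrow_eq (topspace S) A (f, \<phi>) (BSYM_comp (counit X m) (P_arrow S f))"
      using transpose_factors_through_counit[OF arrow] .
  next
    fix S :: "'s topology" and f :: "'s \<Rightarrow> 'x" and \<phi> :: "'a \<Rightarrow> 's \<Rightarrow> 'l" and \<alpha> g
    assume "BS_arrow S \<alpha> (Ext_top X A m) (Ext_alpha X A m) g
      \<and> BSYM_arrow_eq (topspace S) A (f, \<phi>) (BSYM_comp (counit X m) (P_arrow S g))"
    then have "BSYM_arrow_eq (topspace S) A (f, \<phi>) (BSYM_comp (counit X m) (P_arrow S g))" ..
    then show "\<forall>s\<in>topspace S. g s = f s" by (rule BSYM_arrow_eq_counit_P_unique)
  qed
qed

end
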